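(* Let $\alpha\in(0,1)$, $\sigma=1-\alpha/2$, and let $0=t_0<t_1<\cdots$ be a time mesh with $\tau_j=t_j-t_{j-1}$, $\rho_j=\tau_j/\tau_{j-1}$, such that for every $k\ge2$: $\rho_k>\rho_*$, $\rho_{k+1}>\rho_*$, and if $\rho_k<\eta$ then $\rho_{k+1}\le \rho_k^2(1+\rho_k)/(1-3\rho_k^2(1+\rho_k))$. Let the lower-triangular entries $[\mathbf M]_{k,j}$ be as defined in the context. Then: (Q1) for all $1\le j\le k$, $$[\mathbf M]_{k,j}\ge\frac{\rho_*}{(1+\rho_* )\tau_j}\int_{t_{j-1}}^{\min\{t_j,t_k^*\}}(t_k^*-s)^{-\alpha}\,\mathrm ds;$$ (Q2) for all $2\le j\le k-1$, $$[\mathbf M]_{k,j}-[\mathbf M]_{k,j-1}\ge\frac{\alpha\tau_j}{\tau_j+\tau_{j+1}}\int_0^1(\tau_j+\tau_{j+1}-s\tau_j)(1-s)(t_k^*-t_{j-1}-s\tau_j)^{-\alpha-1}\,\mathrm ds,$$ and for all $k\ge2$, $[\mathbf M]_{k,k}-[\mathbf M]_{k,k-1}\ge\dfrac{\alpha}{2(1-\alpha)(\sigma\tau_k)^\alpha}$; (Q3) if moreover $\rho_k\ge\eta$ for all $k\ge2$, then $\frac{1-\alpha}{\sigma}[\mathbf M]_{k,k}-[\mathbf M]_{k,k-1}\ge0$ for all $k\ge2$.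
   Context: Notation: $t_k^*=t_{k-1}+\sigma\tau_k$. For $k\ge2$ and $1\le j\le k-1$ define $$a_j^k=\int_0^1\frac{-2\tau_j(1-\theta)-\tau_{j+1}}{(\tau_j+\tau_{j+1})\,(t_k^*-t_{j-1}-\theta\tau_j)^\alpha}\,\mathrm d\theta,\qquad c_j^k=\int_0^1\frac{\tau_j^2(2\theta-1)}{\tau_{j+1}(\tau_j+\tau_{j+1})\,(t_k^*-t_{j-1}-\theta\tau_j)^\alpha}\,\mathrm d\theta,$$ and $d_j^k=c_{j-1}^k-a_j^k$ for $2\le j\le k-1$. The entries $[\mathbf M]_{k,j}$, $1\le j\le k$, are: $[\mathbf M]_{1,1}=\frac{\sigma^{1-\alpha}}{(1-\alpha)\tau_1^\alpha}$; for $k\ge2$, $[\mathbf M]_{k,1}=-a_1^k$, $[\mathbf M]_{k,j}=d_j^k$ for $2\le j\le k-1$, and $[\mathbf M]_{k,k}=c_{k-1}^k+\frac{\sigma^{1-\alpha}}{(1-\alpha)\tau_k^\alpha}$. $\rho_*\approx 0.356341$ is the unique positive root of $\rho(1+\rho)=1-3\rho^2(1+\rho)$, and $\eta\approx0.475329$ is the unique positive root of $1-3\rho^2(1+\rho)=0$. *)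

theory Defs
  imports "HOL-Analysis.Analysis"
begin

definition rho_star :: real where
  "rho_star = (THE r. r > 0 \<and> r * (1 + r) = 1 - 3 * r^2 * (1 + r))"

definition eta :: real where
  "eta = (THE r. r > 0 \<and> 1 - 3 * r^2 * (1 + r) = 0)"

definition sigma :: "real \<Rightarrow> real" where
  "sigma \<alpha> = 1 - \<alpha> / 2"

definition tau :: "(nat \<Rightarrow> real) \<Rightarrow> nat \<Rightarrow> real" where
  "tau t j = t j - t (j - 1)"

definition rho :: "(nat \<Rightarrow> real) \<Rightarrow> nat \<Rightarrow> real" where
  "rho t j = tau t j / tau t (j - 1)"

definition tstar :: "(nat \<Rightarrow> real) \<Rightarrow> real \<Rightarrow> nat \<Rightarrow> real" where
  "tstar t \<alpha> k = t (k - 1) + sigma \<alpha> * tau t k"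

definition coef_a :: "(nat \<Rightarrow> real) \<Rightarrow> real \<Rightarrow> nat \<Rightarrow> nat \<Rightarrow> real" where
  "coef_a t \<alpha> k j = integral {0..1} (\<lambda>\<theta>.
     (- 2 * tau t j * (1 - \<theta>) - tau t (j + 1)) /
     ((tau t j + tau t (j + 1)) * (tstar t \<alpha> k - t (j - 1) - \<theta> * tau t j) powr \<alpha>))"

definition coef_c :: "(nat \<Rightarrow> real) \<Rightarrow> real \<Rightarrow> nat \<Rightarrow> nat \<Rightarrow> real" where
  "coef_c t \<alpha> k j = integral {0..1} (\<lambda>\<theta>.
     (tau t j ^ 2 * (2 * \<theta> - 1)) /
     (tau t (j + 1) * (tau t j + tau t (j + 1)) * (tstar t \<alpha> k - t (j - 1) - \<theta> * tau t j) powr \<alpha>))"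

definition coef_d :: "(nat \<Rightarrow> real) \<Rightarrow> real \<Rightarrow> nat \<Rightarrow> nat \<Rightarrow> real" where
  "coef_d t \<alpha> k j = coef_c t \<alpha> k (j - 1) - coef_a t \<alpha> k j"

definition Mmat :: "(nat \<Rightarrow> real) \<Rightarrow> real \<Rightarrow> nat \<Rightarrow> nat \<Rightarrow> real" where
  "Mmat t \<alpha> k j =
    (if k = 1 \<and> j = 1 then sigma \<alpha> powr (1 - \<alpha>) / ((1 - \<alpha>) * tau t 1 powr \<alpha>)
     else if 2 \<le> k \<and> j = 1 then - coef_a t \<alpha> k 1
     else if 2 \<le> k \<and> 2 \<le> j \<and> j \<le> k - 1 then coef_d t \<alpha> k j
     else if 2 \<le> k \<and> j = k then coef_c t \<alpha> k (k - 1) + sigma \<alpha> powr (1 - \<alpha>) / ((1 - \<alpha>) * tau t k powr \<alpha>)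
     else 0)"

end

(*
  On the j-th step put e(\<theta>) = (t_k^* - t_{j-1} - \<theta> \<tau>_j)^{-\<alpha>} for 0 \<le> \<theta> \<le> 1. Both a_j^k and c_j^k
  are linear in the integral of e and in its centred moment, the integral of (\<theta> - 1/2) e. The kernel
  e is increasing with slope between \<alpha> \<tau>_j (t_k^* - t_{j-1})^{-\<alpha>-1} and \<alpha> \<tau>_j (t_k^* - t_j)^{-\<alpha>-1},
  and comparing it with lines through e(1/2) traps the centred moment between these slopes divided by 12.

  Hence c_j^k \<ge> 0, which gives (Q1) once the integral of e is computed, and integration by parts turns
  -a_j^k into (t_k^* - t_{j-1})^{-\<alpha>} plus the integral in (Q2). What is left of [M]_{k,j} - [M]_{k,j-1}
  is c_{j-1} + a_{j-1} + (t_k^* - t_{j-1})^{-\<alpha>} - c_{j-2}. The lower bound for the first three terms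
  and the upper bound for c_{j-2} carry the same factor (t_k^* - t_{j-2})^{-\<alpha>-1}, and the step-ratio
  hypothesis is exactly what makes the former dominate. (Q3) is the same argument without c_{j-1},
  using \<rho>_k \<ge> \<eta>.
*)

theory Submission
  imports Defs
begin

section \<open>Slopes and centred moments on the unit interval\<close>

lemma slope_ge_of_deriv_ge:
  fixes f f' :: "real \<Rightarrow> real"
  assumes deriv: "\<And>x. a \<le> x \<Longrightarrow> x \<le> b \<Longrightarrow> (f has_real_derivative f' x) (at x)"
    and bound: "\<And>x. a \<le> x \<Longrightarrow> x \<le> b \<Longrightarrow> L \<le> f' x"
    and "a \<le> x" "x \<le> y" "y \<le> b"
  shows "L * (y - x) \<le> f y - f x"
proof -
  have "f x - L * x \<le> f y - L * y"
  proof (rule DERIV_nonneg_imp_nondecreasing[OF \<open>x \<le> y\<close>])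
    fix z assume "x \<le> z" "z \<le> y"
    with deriv bound assms(3-5) have "((\<lambda>z. f z - L * z) has_real_derivative f' z - L) (at z)" "0 \<le> f' z - L"
      by (auto intro!: derivative_eq_intros)
    then show "\<exists>d. ((\<lambda>z. f z - L * z) has_real_derivative d) (at z) \<and> 0 \<le> d" by blast
  qed
  then show ?thesis by (simp add: algebra_simps)
qed

lemma slope_le_of_deriv_le:
  fixes f f' :: "real \<Rightarrow> real"
  assumes "\<And>x. a \<le> x \<Longrightarrow> x \<le> b \<Longrightarrow> (f has_real_derivative f' x) (at x)"
    and "\<And>x. a \<le> x \<Longrightarrow> x \<le> b \<Longrightarrow> f' x \<le> S"
    and "a \<le> x" "x \<le> y" "y \<le> b"
  shows "f y - f x \<le> S * (y - x)"
proof -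
  have "- S * (y - x) \<le> - f y - - f x"
    by (rule slope_ge_of_deriv_ge[of a b _ "\<lambda>x. - f' x"]) (use assms in \<open>auto intro: DERIV_minus\<close>)
  then show ?thesis by simp
qed

lemma has_real_derivative_affine_powr:
  fixes Z \<tau> r x :: real
  assumes "0 < Z - x * \<tau>"
  shows "((\<lambda>\<theta>. (Z - \<theta> * \<tau>) powr r) has_real_derivative - r * \<tau> * (Z - x * \<tau>) powr (r - 1)) (at x)"
  by (rule derivative_eq_intros refl | use assms in simp)+

lemma has_integral_affine_powr:
  fixes \<alpha> \<tau> Z :: real
  assumes "\<alpha> < 1" "0 < \<tau>" "a \<le> b" "0 \<le> Z - b * \<tau>"
  shows "((\<lambda>x. (Z - x * \<tau>) powr (- \<alpha>)) has_integral
           ((Z - a * \<tau>) powr (1 - \<alpha>) - (Z - b * \<tau>) powr (1 - \<alpha>)) / ((1 - \<alpha>) * \<tau>)) {a..b}"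
proof -
  define F where "F x = - ((Z - x * \<tau>) powr (1 - \<alpha>)) / ((1 - \<alpha>) * \<tau>)" for x :: real
  have base_nonneg: "0 \<le> Z - x * \<tau>" if "x \<le> b" for x
    using assms mult_right_mono[OF that, of \<tau>] by linarith
  have "((\<lambda>x. (Z - x * \<tau>) powr (- \<alpha>)) has_integral F b - F a) {a..b}"
  proof (rule fundamental_theorem_of_calculus_interior[OF \<open>a \<le> b\<close>])
    show "continuous_on {a..b} F"
      unfolding F_def using assms base_nonneg
      by (intro continuous_intros continuous_on_powr') auto
  next
    fix x assume "x \<in> {a<..<b}"
    then have "x * \<tau> < b * \<tau>"
      using assms by (simp add: mult_strict_right_mono)
    then have "0 < Z - x * \<tau>"
      using assms by linarith
    then have "(F has_real_derivative
        - (- (1 - \<alpha>) * \<tau> * (Z - x * \<tau>) powr (1 - \<alpha> - 1)) / ((1 - \<alpha>) * \<tau>)) (at x)"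
      unfolding F_def by (intro DERIV_cdivide DERIV_minus has_real_derivative_affine_powr)
    moreover have "- (- (1 - \<alpha>) * \<tau> * (Z - x * \<tau>) powr (1 - \<alpha> - 1)) / ((1 - \<alpha>) * \<tau>)
        = (Z - x * \<tau>) powr (- \<alpha>)"
      using assms by (simp add: field_simps)
    ultimately have "(F has_real_derivative (Z - x * \<tau>) powr (- \<alpha>)) (at x)" by simp
    then show "(F has_vector_derivative (Z - x * \<tau>) powr (- \<alpha>)) (at x)"
      by (simp add: has_real_derivative_iff_has_vector_derivative)
  qed
  then show ?thesis by (simp add: F_def diff_divide_distrib)
qed

definition centered_moment :: "(real \<Rightarrow> real) \<Rightarrow> real" where
  "centered_moment e = integral {0..1} (\<lambda>\<theta>. (\<theta> - 1/2) * e \<theta>)"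

lemma centered_moment_ge:
  fixes e :: "real \<Rightarrow> real"
  assumes cont: "continuous_on {0..1} e"
    and slope: "\<And>x y. 0 \<le> x \<Longrightarrow> x \<le> y \<Longrightarrow> y \<le> 1 \<Longrightarrow> L * (y - x) \<le> e y - e x"
  shows "L / 12 \<le> centered_moment e"
proof -
  have poly: "((\<lambda>\<theta>. (\<theta> - 1/2) * e (1/2) + L * (\<theta> - 1/2)^2) has_integral L / 12) {0..1}"
  proof -
    define F where "F \<theta> = e (1/2) * (\<theta> - 1/2)^2 / 2 + L * (\<theta> - 1/2)^3 / 3" for \<theta> :: real
    have "((\<lambda>\<theta>. (\<theta> - 1/2) * e (1/2) + L * (\<theta> - 1/2)^2) has_integral F 1 - F 0) {0..1}"
      unfolding F_def
      by (intro fundamental_theorem_of_calculus)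
        (auto intro!: derivative_eq_intros simp: has_real_derivative_iff_has_vector_derivative[symmetric]
          power2_eq_square field_simps)
    then show ?thesis by (simp add: F_def power2_eq_square power3_eq_cube)
  qed
  have "L / 12 \<le> integral {0..1} (\<lambda>\<theta>. (\<theta> - 1/2) * e \<theta>)"
  proof (rule has_integral_le[OF poly integrable_integral])
    show "(\<lambda>\<theta>. (\<theta> - 1/2) * e \<theta>) integrable_on {0..1}"
      by (intro integrable_continuous_interval continuous_intros cont)
  next
    fix \<theta> :: real assume "\<theta> \<in> {0..1}"
    have "(\<theta> - 1/2) * (L * (\<theta> - 1/2)) \<le> (\<theta> - 1/2) * (e \<theta> - e (1/2))"
    proof (cases "\<theta> \<le> 1/2")
      case True
      with \<open>\<theta> \<in> {0..1}\<close> have "e \<theta> - e (1/2) \<le> L * (\<theta> - 1/2)"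
        using slope[of \<theta> "1/2"] by (simp add: algebra_simps)
      with True show ?thesis by (intro mult_left_mono_neg) auto
    next
      case False
      with \<open>\<theta> \<in> {0..1}\<close> have "L * (\<theta> - 1/2) \<le> e \<theta> - e (1/2)"
        using slope[of "1/2" \<theta>] by simp
      with False show ?thesis by (intro mult_left_mono) auto
    qed
    then show "(\<theta> - 1/2) * e (1/2) + L * (\<theta> - 1/2)^2 \<le> (\<theta> - 1/2) * e \<theta>"
      by (simp add: power2_eq_square algebra_simps)
  qed
  then show ?thesis by (simp add: centered_moment_def)
qed

lemma centered_moment_le:
  fixes e :: "real \<Rightarrow> real"
  assumes cont: "continuous_on {0..1} e"
    and slope: "\<And>x y. 0 \<le> x \<Longrightarrow> x \<le> y \<Longrightarrow> y \<le> 1 \<Longrightarrow> e y - e x \<le> S * (y - x)"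
  shows "centered_moment e \<le> S / 12"
proof -
  have "- S / 12 \<le> centered_moment (\<lambda>\<theta>. - e \<theta>)"
  proof (rule centered_moment_ge)
    fix x y :: real assume "0 \<le> x" "x \<le> y" "y \<le> 1"
    then show "- S * (y - x) \<le> - e y - - e x" using slope[of x y] by simp
  qed (use cont in \<open>auto intro: continuous_intros\<close>)
  then show ?thesis by (simp add: centered_moment_def)
qed

lemma centered_moment_le_half_integral:
  fixes e :: "real \<Rightarrow> real"
  assumes cont: "continuous_on {0..1} e" and nonneg: "\<And>\<theta>. 0 \<le> \<theta> \<Longrightarrow> \<theta> \<le> 1 \<Longrightarrow> 0 \<le> e \<theta>"
  shows "centered_moment e \<le> integral {0..1} e / 2"
proof -
  have "centered_moment e \<le> integral {0..1} (\<lambda>\<theta>. e \<theta> / 2)"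
    unfolding centered_moment_def
  proof (rule integral_le)
    fix \<theta> :: real assume "\<theta> \<in> {0..1}"
    then show "(\<theta> - 1/2) * e \<theta> \<le> e \<theta> / 2"
      using nonneg[of \<theta>] mult_left_le_one_le[of "e \<theta>" \<theta>] by (auto simp: algebra_simps)
  qed (use cont in \<open>auto intro!: integrable_continuous_interval continuous_intros\<close>)
  then show ?thesis by simp
qed

lemma integral_le_endpoint:
  fixes e :: "real \<Rightarrow> real"
  assumes cont: "continuous_on {0..1} e"
    and slope: "\<And>x y. 0 \<le> x \<Longrightarrow> x \<le> y \<Longrightarrow> y \<le> 1 \<Longrightarrow> L * (y - x) \<le> e y - e x"
  shows "L / 2 \<le> e 1 - integral {0..1} e"
proof -
  have lin: "((\<lambda>\<theta>. L * (1 - \<theta>)) has_integral L / 2) {0..1}"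
  proof -
    define F where "F \<theta> = L * \<theta> - L * \<theta>^2 / 2" for \<theta> :: real
    have "((\<lambda>\<theta>. L * (1 - \<theta>)) has_integral F 1 - F 0) {0..1}"
      unfolding F_def
      by (intro fundamental_theorem_of_calculus)
        (auto intro!: derivative_eq_intros simp: has_real_derivative_iff_has_vector_derivative[symmetric]
          algebra_simps)
    then show ?thesis by (simp add: F_def)
  qed
  have "L / 2 \<le> integral {0..1} (\<lambda>\<theta>. e 1 - e \<theta>)"
  proof (rule has_integral_le[OF lin integrable_integral])
    show "(\<lambda>\<theta>. e 1 - e \<theta>) integrable_on {0..1}"
      by (intro integrable_continuous_interval continuous_intros cont)
  qed (use slope in auto)
  also have "\<dots> = e 1 - integral {0..1} e"
    using cont by (simp add: integral_diff integrable_continuous_interval)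
  finally show ?thesis .
qed

section \<open>The kernel on one mesh step\<close>

(* step_kernel \<alpha> Z \<tau> \<theta> is (t_k^* - s)^{-\<alpha>} at s = t_{j-1} + \<theta> \<tau>_j, where Z = t_k^* - t_{j-1}, \<tau> = \<tau>_j. *)
definition step_kernel :: "real \<Rightarrow> real \<Rightarrow> real \<Rightarrow> real \<Rightarrow> real" where
  "step_kernel \<alpha> Z \<tau> \<theta> = (Z - \<theta> * \<tau>) powr (- \<alpha>)"

lemma step_kernel_base_pos:
  fixes Z \<tau> \<theta> :: real
  assumes "0 < \<tau>" "\<tau> < Z" "0 \<le> \<theta>" "\<theta> \<le> 1"
  shows "0 < Z - \<theta> * \<tau>"
  using assms mult_left_le_one_le[of \<tau> \<theta>] by linarith

lemma has_real_derivative_step_kernel: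
  assumes "0 < Z - \<theta> * \<tau>"
  shows "(step_kernel \<alpha> Z \<tau> has_real_derivative \<alpha> * \<tau> * (Z - \<theta> * \<tau>) powr (- \<alpha> - 1)) (at \<theta>)"
  unfolding step_kernel_def using has_real_derivative_affine_powr[OF assms, of "- \<alpha>"] by simp

lemma continuous_on_step_kernel:
  assumes "0 < \<tau>" "\<tau> < Z"
  shows "continuous_on {0..1} (step_kernel \<alpha> Z \<tau>)"
  using has_real_derivative_step_kernel[OF step_kernel_base_pos[OF assms]]
  by (intro DERIV_continuous_on) (auto intro: has_field_derivative_at_within)

lemma step_kernel_slope_ge:
  assumes "0 \<le> \<alpha>" "0 < \<tau>" "\<tau> < Z" "0 \<le> x" "x \<le> y" "y \<le> 1"
  shows "\<alpha> * \<tau> * Z powr (- \<alpha> - 1) * (y - x) \<le> step_kernel \<alpha> Z \<tau> y - step_kernel \<alpha> Z \<tau> x"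
proof (rule slope_ge_of_deriv_ge[OF has_real_derivative_step_kernel])
  fix \<theta> :: real assume "0 \<le> \<theta>" "\<theta> \<le> 1"
  with assms have "0 < Z - \<theta> * \<tau>" "Z - \<theta> * \<tau> \<le> Z"
    using step_kernel_base_pos by auto
  then have "Z powr (- \<alpha> - 1) \<le> (Z - \<theta> * \<tau>) powr (- \<alpha> - 1)"
    using assms by (intro powr_mono2') auto
  then show "\<alpha> * \<tau> * Z powr (- \<alpha> - 1) \<le> \<alpha> * \<tau> * (Z - \<theta> * \<tau>) powr (- \<alpha> - 1)"
    using assms by (intro mult_left_mono) auto
qed (use assms step_kernel_base_pos in auto)

lemma step_kernel_slope_le:
  assumes "0 \<le> \<alpha>" "0 < \<tau>" "\<tau> < Z" "0 \<le> x" "x \<le> y" "y \<le> 1"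
  shows "step_kernel \<alpha> Z \<tau> y - step_kernel \<alpha> Z \<tau> x \<le> \<alpha> * \<tau> * (Z - \<tau>) powr (- \<alpha> - 1) * (y - x)"
proof (rule slope_le_of_deriv_le[OF has_real_derivative_step_kernel])
  fix \<theta> :: real assume "0 \<le> \<theta>" "\<theta> \<le> 1"
  with assms have "Z - \<tau> \<le> Z - \<theta> * \<tau>"
    using mult_left_le_one_le[of \<tau> \<theta>] by auto
  then have "(Z - \<theta> * \<tau>) powr (- \<alpha> - 1) \<le> (Z - \<tau>) powr (- \<alpha> - 1)"
    using assms by (intro powr_mono2') auto
  then show "\<alpha> * \<tau> * (Z - \<theta> * \<tau>) powr (- \<alpha> - 1) \<le> \<alpha> * \<tau> * (Z - \<tau>) powr (- \<alpha> - 1)"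
    using assms by (intro mult_left_mono) auto
qed (use assms step_kernel_base_pos in auto)

lemma integral_step_kernel:
  assumes "\<alpha> < 1" "0 < \<tau>" "\<tau> < Z"
  shows "integral {0..1} (step_kernel \<alpha> Z \<tau>) = (Z powr (1 - \<alpha>) - (Z - \<tau>) powr (1 - \<alpha>)) / ((1 - \<alpha>) * \<tau>)"
  unfolding step_kernel_def using has_integral_affine_powr[of \<alpha> \<tau> 0 1 Z] assms
  by (simp add: integral_unique)

lemma step_kernel_centered_moment_bounds:
  assumes "0 \<le> \<alpha>" "0 < \<tau>" "\<tau> < Z"
  shows "\<alpha> * \<tau> * Z powr (- \<alpha> - 1) / 12 \<le> centered_moment (step_kernel \<alpha> Z \<tau>)"
    and "centered_moment (step_kernel \<alpha> Z \<tau>) \<le> \<alpha> * \<tau> * (Z - \<tau>) powr (- \<alpha> - 1) / 12"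
  using continuous_on_step_kernel[OF assms(2,3)] step_kernel_slope_ge[OF assms] step_kernel_slope_le[OF assms]
  by (blast intro: centered_moment_ge centered_moment_le)+

lemma step_kernel_integral_le_endpoint:
  assumes "0 \<le> \<alpha>" "0 < \<tau>" "\<tau> < Z"
  shows "\<alpha> * \<tau> * Z powr (- \<alpha> - 1) / 2 \<le> (Z - \<tau>) powr (- \<alpha>) - integral {0..1} (step_kernel \<alpha> Z \<tau>)"
  using integral_le_endpoint[OF continuous_on_step_kernel[OF assms(2,3)] step_kernel_slope_ge[OF assms]]
  by (simp add: step_kernel_def[of \<alpha> Z \<tau> 1])

lemma integrable_step_kernel_moment:
  assumes "0 < \<tau>" "\<tau> < Z"
  shows "step_kernel \<alpha> Z \<tau> integrable_on {0..1}"
    and "(\<lambda>\<theta>. (\<theta> - 1/2) * step_kernel \<alpha> Z \<tau> \<theta>) integrable_on {0..1}"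
  using continuous_on_step_kernel[OF assms]
  by (auto intro!: integrable_continuous_interval continuous_intros)

lemma integral_a_weight_eq_moments:
  fixes \<alpha> Z \<tau> \<tau>' :: real
  assumes "0 < \<tau>" "0 < \<tau>'" "\<tau> < Z"
  shows "integral {0..1} (\<lambda>\<theta>. (- 2 * \<tau> * (1 - \<theta>) - \<tau>') / ((\<tau> + \<tau>') * (Z - \<theta> * \<tau>) powr \<alpha>))
    = 2 * \<tau> / (\<tau> + \<tau>') * centered_moment (step_kernel \<alpha> Z \<tau>) - integral {0..1} (step_kernel \<alpha> Z \<tau>)"
proof -
  have "integral {0..1} (\<lambda>\<theta>. (- 2 * \<tau> * (1 - \<theta>) - \<tau>') / ((\<tau> + \<tau>') * (Z - \<theta> * \<tau>) powr \<alpha>))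
      = integral {0..1} (\<lambda>\<theta>. 2 * \<tau> / (\<tau> + \<tau>') * ((\<theta> - 1/2) * step_kernel \<alpha> Z \<tau> \<theta>) - step_kernel \<alpha> Z \<tau> \<theta>)"
  proof (rule integral_cong)
    fix \<theta> :: real assume "\<theta> \<in> {0..1}"
    then have "0 < Z - \<theta> * \<tau>"
      using step_kernel_base_pos[OF assms(1,3)] by simp
    then have "0 < (Z - \<theta> * \<tau>) powr \<alpha>" by simp
    moreover have "(- 2 * \<tau> * (1 - \<theta>) - \<tau>') / ((\<tau> + \<tau>') * P)
        = 2 * \<tau> / (\<tau> + \<tau>') * ((\<theta> - 1/2) * (1 / P)) - 1 / P" if "0 < P" for P :: real
      using assms that by (simp add: field_simps add_pos_pos[THEN less_imp_neq, symmetric])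
    ultimately show "(- 2 * \<tau> * (1 - \<theta>) - \<tau>') / ((\<tau> + \<tau>') * (Z - \<theta> * \<tau>) powr \<alpha>)
        = 2 * \<tau> / (\<tau> + \<tau>') * ((\<theta> - 1/2) * step_kernel \<alpha> Z \<tau> \<theta>) - step_kernel \<alpha> Z \<tau> \<theta>"
      by (simp only: step_kernel_def powr_minus_divide)
  qed
  also have "\<dots> = 2 * \<tau> / (\<tau> + \<tau>') * centered_moment (step_kernel \<alpha> Z \<tau>) - integral {0..1} (step_kernel \<alpha> Z \<tau>)"
    unfolding centered_moment_def
    by (intro integral_unique has_integral_diff has_integral_mult_right integrable_integral
        integrable_step_kernel_moment assms)
  finally show ?thesis .
qed

lemma integral_c_weight_eq_moment:
  fixes \<alpha> Z \<tau> \<tau>' :: real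
  assumes "0 < \<tau>" "0 < \<tau>'" "\<tau> < Z"
  shows "integral {0..1} (\<lambda>\<theta>. (\<tau> ^ 2 * (2 * \<theta> - 1)) / (\<tau>' * (\<tau> + \<tau>') * (Z - \<theta> * \<tau>) powr \<alpha>))
    = 2 * \<tau>^2 / (\<tau>' * (\<tau> + \<tau>')) * centered_moment (step_kernel \<alpha> Z \<tau>)"
proof -
  have "integral {0..1} (\<lambda>\<theta>. (\<tau> ^ 2 * (2 * \<theta> - 1)) / (\<tau>' * (\<tau> + \<tau>') * (Z - \<theta> * \<tau>) powr \<alpha>))
      = integral {0..1} (\<lambda>\<theta>. 2 * \<tau>^2 / (\<tau>' * (\<tau> + \<tau>')) * ((\<theta> - 1/2) * step_kernel \<alpha> Z \<tau> \<theta>))"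
  proof (rule integral_cong)
    fix \<theta> :: real assume "\<theta> \<in> {0..1}"
    then have "0 < Z - \<theta> * \<tau>"
      using step_kernel_base_pos[OF assms(1,3)] by simp
    then have "0 < (Z - \<theta> * \<tau>) powr \<alpha>" by simp
    moreover have "(\<tau> ^ 2 * (2 * \<theta> - 1)) / (\<tau>' * (\<tau> + \<tau>') * P)
        = 2 * \<tau>^2 / (\<tau>' * (\<tau> + \<tau>')) * ((\<theta> - 1/2) * (1 / P))" if "0 < P" for P :: real
      using assms that by (simp add: field_simps add_pos_pos[THEN less_imp_neq, symmetric])
    ultimately show "(\<tau> ^ 2 * (2 * \<theta> - 1)) / (\<tau>' * (\<tau> + \<tau>') * (Z - \<theta> * \<tau>) powr \<alpha>)
        = 2 * \<tau>^2 / (\<tau>' * (\<tau> + \<tau>')) * ((\<theta> - 1/2) * step_kernel \<alpha> Z \<tau> \<theta>)"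
      by (simp only: step_kernel_def powr_minus_divide)
  qed
  then show ?thesis by (simp add: centered_moment_def)
qed

lemma has_integral_a_weight_by_parts:
  fixes \<alpha> Z \<tau> \<tau>' :: real
  assumes "0 < \<tau>" "\<tau> < Z"
  shows "((\<lambda>s. (- 2 * \<tau> * (1 - s) - \<tau>') * step_kernel \<alpha> Z \<tau> s) has_integral
      - (\<tau> + \<tau>') * Z powr (- \<alpha>) - \<alpha> * \<tau> *
        integral {0..1} (\<lambda>s. (\<tau> + \<tau>' - s * \<tau>) * (1 - s) * (Z - s * \<tau>) powr (- \<alpha> - 1))) {0..1}"
proof -
  define w where "w s = (\<tau> + \<tau>' - s * \<tau>) * (1 - s)" for s :: real
  define e where "e = step_kernel \<alpha> Z \<tau>"
  define e' where "e' s = \<alpha> * \<tau> * (Z - s * \<tau>) powr (- \<alpha> - 1)" for s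
  have pos: "0 < Z - s * \<tau>" if "s \<in> {0..1}" for s
    using step_kernel_base_pos[OF assms] that by auto
  have "((\<lambda>s. (- 2 * \<tau> * (1 - s) - \<tau>') * e s + w s * e' s) has_integral w 1 * e 1 - w 0 * e 0) {0..1}"
  proof (rule fundamental_theorem_of_calculus)
    fix s :: real assume "s \<in> {0..1}"
    have "((\<lambda>s. w s * e s) has_real_derivative (- 2 * \<tau> * (1 - s) - \<tau>') * e s + w s * e' s) (at s)"
      unfolding w_def e_def e'_def
      by (rule derivative_eq_intros has_real_derivative_step_kernel[OF pos[OF \<open>s \<in> {0..1}\<close>]] refl
          | simp add: algebra_simps)+
    then show "((\<lambda>s. w s * e s) has_vector_derivative (- 2 * \<tau> * (1 - s) - \<tau>') * e s + w s * e' s)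
        (at s within {0..1})"
      by (simp add: has_real_derivative_iff_has_vector_derivative has_vector_derivative_at_within)
  qed simp
  moreover have "(\<lambda>s. w s * e' s) integrable_on {0..1}"
    unfolding w_def e'_def
    by (intro integrable_continuous_interval continuous_intros ballI) (metis pos order_less_irrefl)
  ultimately have "((\<lambda>s. (- 2 * \<tau> * (1 - s) - \<tau>') * e s + w s * e' s - w s * e' s) has_integral
      w 1 * e 1 - w 0 * e 0 - integral {0..1} (\<lambda>s. w s * e' s)) {0..1}"
    by (intro has_integral_diff integrable_integral)
  moreover have "w 1 * e 1 - w 0 * e 0 = - (\<tau> + \<tau>') * Z powr (- \<alpha>)"
    by (simp add: w_def e_def step_kernel_def algebra_simps)
  moreover have "integral {0..1} (\<lambda>s. w s * e' s)
      = \<alpha> * \<tau> * integral {0..1} (\<lambda>s. w s * (Z - s * \<tau>) powr (- \<alpha> - 1))"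
    unfolding e'_def by (subst integral_mult_right[symmetric]) (simp add: ac_simps)
  ultimately show ?thesis by (simp add: w_def e_def)
qed

lemma integral_a_weight_by_parts:
  fixes \<alpha> Z \<tau> \<tau>' :: real
  assumes "0 < \<tau>" "0 < \<tau>'" "\<tau> < Z"
  shows "integral {0..1} (\<lambda>\<theta>. (- 2 * \<tau> * (1 - \<theta>) - \<tau>') / ((\<tau> + \<tau>') * (Z - \<theta> * \<tau>) powr \<alpha>))
    = - (Z powr (- \<alpha>)) - \<alpha> * \<tau> / (\<tau> + \<tau>') *
        integral {0..1} (\<lambda>s. (\<tau> + \<tau>' - s * \<tau>) * (1 - s) * (Z - s * \<tau>) powr (- \<alpha> - 1))"
proof -
  have "integral {0..1} (\<lambda>\<theta>. (- 2 * \<tau> * (1 - \<theta>) - \<tau>') / ((\<tau> + \<tau>') * (Z - \<theta> * \<tau>) powr \<alpha>))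
      = integral {0..1} (\<lambda>s. 1 / (\<tau> + \<tau>') * ((- 2 * \<tau> * (1 - s) - \<tau>') * step_kernel \<alpha> Z \<tau> s))"
    by (intro integral_cong) (simp add: step_kernel_def powr_minus_divide)
  also have "\<dots> = 1 / (\<tau> + \<tau>') * (- (\<tau> + \<tau>') * Z powr (- \<alpha>) - \<alpha> * \<tau> *
      integral {0..1} (\<lambda>s. (\<tau> + \<tau>' - s * \<tau>) * (1 - s) * (Z - s * \<tau>) powr (- \<alpha> - 1)))"
    by (intro integral_unique has_integral_mult_right has_integral_a_weight_by_parts assms(1,3))
  finally show ?thesis
    using assms by (simp add: field_simps add_pos_pos[THEN less_imp_neq, symmetric])
qed

section \<open>The constants rho_star and eta\<close>

lemma ex1_positive_root:
  fixes f :: "real \<Rightarrow> real"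
  assumes mono: "strict_mono_on {0..} f" and cont: "continuous_on {0..1} f"
    and "f 0 < c" "c \<le> f 1"
  shows "\<exists>!r. 0 < r \<and> f r = c"
proof -
  obtain r where r: "0 \<le> r" "r \<le> 1" "f r = c"
    using IVT'[of f 0 c 1] assms by auto
  with \<open>f 0 < c\<close> have "0 < r" by (cases "r = 0") auto
  moreover have "s = r" if "0 < s" "f s = c" for s
    using strict_mono_on_eq[OF mono, of s r] that r by auto
  ultimately show ?thesis using r by blast
qed

lemma strict_mono_on_cubic: "strict_mono_on {0..} (\<lambda>r::real. r^2 * (1 + r))"
  by (rule strict_mono_onI) (auto intro!: mult_strict_mono power_strict_mono)

lemma eta_root: "0 < eta" "3 * eta^2 * (1 + eta) = 1"
proof -
  have "\<exists>!r::real. 0 < r \<and> 3 * (r^2 * (1 + r)) = 1"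
    using strict_mono_on_cubic
    by (intro ex1_positive_root) (auto intro!: continuous_intros simp: strict_mono_on_def)
  then have "\<exists>!r::real. 0 < r \<and> 1 - 3 * r^2 * (1 + r) = 0"
    by (simp add: algebra_simps)
  from theI'[OF this] show "0 < eta" "3 * eta^2 * (1 + eta) = 1"
    unfolding eta_def by auto
qed

lemma less_eta_iff:
  assumes "0 < r"
  shows "r < eta \<longleftrightarrow> 3 * r^2 * (1 + r) < 1"
  using strict_mono_on_less[OF strict_mono_on_cubic, of r eta] assms eta_root by auto

lemma rho_star_pos: "0 < rho_star"
proof -
  have "strict_mono_on {0..} (\<lambda>r::real. r * (1 + r) + 3 * (r^2 * (1 + r)))"
    using strict_mono_on_cubic
    by (intro strict_mono_onI add_strict_mono) (auto intro!: mult_strict_mono simp: strict_mono_on_def)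
  then have "\<exists>!r::real. 0 < r \<and> r * (1 + r) + 3 * (r^2 * (1 + r)) = 1"
    by (intro ex1_positive_root) (auto intro!: continuous_intros)
  then have "\<exists>!r::real. 0 < r \<and> r * (1 + r) = 1 - 3 * r^2 * (1 + r)"
    by (simp add: algebra_simps)
  from theI'[OF this] show ?thesis
    unfolding rho_star_def by auto
qed

lemma mesh_ratio_bound:
  fixes r r' :: real
  assumes "0 < r" "0 < r'"
    and mesh: "r < eta \<Longrightarrow> r' \<le> r^2 * (1 + r) / (1 - 3 * r^2 * (1 + r))"
  shows "1 / (6 * (r^2 * (1 + r))) \<le> 1/2 + 1 / (6 * r')"
proof -
  define X where "X = r^2 * (1 + r)"
  have "0 < X" using assms by (simp add: X_def)
  have "1 \<le> 3 * X + X / r'"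
  proof (cases "r < eta")
    case True
    then have "3 * X < 1" using less_eta_iff[OF \<open>0 < r\<close>] by (simp add: X_def)
    moreover have "r' \<le> X / (1 - 3 * X)"
      using mesh True by (simp add: X_def mult.assoc)
    ultimately have "r' * (1 - 3 * X) \<le> X"
      by (simp add: pos_le_divide_eq)
    then show ?thesis using \<open>0 < r'\<close> by (simp add: field_simps)
  next
    case False
    then have "1 \<le> 3 * X" using less_eta_iff[OF \<open>0 < r\<close>] by (simp add: X_def)
    then show ?thesis using \<open>0 < X\<close> \<open>0 < r'\<close> by (simp add: add_increasing2)
  qed
  then have "1 / (6 * X) \<le> (3 * X + X / r') / (6 * X)"
    using \<open>0 < X\<close> by (intro divide_right_mono) auto
  also have "\<dots> = 1/2 + 1 / (6 * r')"
    using \<open>0 < X\<close> \<open>0 < r'\<close> by (simp add: field_simps)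
  finally show ?thesis by (simp add: X_def)
qed

lemma eta_ratio_bound:
  fixes r :: real
  assumes "0 < r" "eta \<le> r"
  shows "1 / (6 * (r^2 * (1 + r))) \<le> 1/2"
proof -
  have "1 \<le> 3 * (r^2 * (1 + r))" using less_eta_iff[OF \<open>0 < r\<close>] assms by simp
  then show ?thesis using assms by (simp add: field_simps)
qed

section \<open>The entries of M\<close>

lemma Mmat_below_diag:
  assumes "1 \<le> j" "j < k"
  shows "Mmat t \<alpha> k j = (if 2 \<le> j then coef_c t \<alpha> k (j - 1) else 0) - coef_a t \<alpha> k j"
  using assms by (auto simp: Mmat_def coef_d_def)

lemma Mmat_diag:
  assumes "1 \<le> k"
  shows "Mmat t \<alpha> k k = (if 2 \<le> k then coef_c t \<alpha> k (k - 1) else 0)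
    + sigma \<alpha> powr (1 - \<alpha>) / ((1 - \<alpha>) * tau t k powr \<alpha>)"
  using assms by (auto simp: Mmat_def)

lemma powr_one_minus_divide_eq:
  fixes s \<tau> \<alpha> :: real
  assumes "0 < s" "0 < \<tau>" "\<alpha> < 1"
  shows "s powr (1 - \<alpha>) / ((1 - \<alpha>) * \<tau> powr \<alpha>) = s / (1 - \<alpha>) * (s * \<tau>) powr (- \<alpha>)"
  using assms by (simp add: powr_diff powr_minus powr_mult field_simps)

context
  fixes t :: "nat \<Rightarrow> real" and \<alpha> :: real
  assumes alpha: "0 < \<alpha>" "\<alpha> < 1" and mono: "strict_mono t"
begin

lemma tau_pos: "1 \<le> j \<Longrightarrow> 0 < tau t j"
  unfolding tau_def using strict_monoD[OF mono, of "j - 1" j] by simp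

lemma rho_pos: "2 \<le> j \<Longrightarrow> 0 < rho t j"
  unfolding rho_def using tau_pos[of j] tau_pos[of "j - 1"] by simp

lemma sigma_bounds: "0 < sigma \<alpha>" "sigma \<alpha> \<le> 1"
  using alpha by (auto simp: sigma_def)

lemma tstar_minus_pred: "tstar t \<alpha> k - t (k - 1) = sigma \<alpha> * tau t k"
  by (simp add: tstar_def)

lemma tstar_bounds:
  assumes "1 \<le> k"
  shows "t (k - 1) < tstar t \<alpha> k" "tstar t \<alpha> k \<le> t k"
proof -
  have "0 < sigma \<alpha> * tau t k" "sigma \<alpha> * tau t k \<le> tau t k"
    using tau_pos[OF assms] sigma_bounds by (auto intro: mult_left_le_one_le)
  then show "t (k - 1) < tstar t \<alpha> k" "tstar t \<alpha> k \<le> t k"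
    by (auto simp: tstar_def tau_def)
qed

lemma less_tstar: "i < k \<Longrightarrow> t i < tstar t \<alpha> k"
  using tstar_bounds(1)[of k] strict_mono_less_eq[OF mono, of i "k - 1"] by auto

lemma tau_less_tstar_minus:
  "1 \<le> i \<Longrightarrow> i < k \<Longrightarrow> tau t i < tstar t \<alpha> k - t (i - 1)"
  using less_tstar[of i k] by (simp add: tau_def)

abbreviation kernel :: "nat \<Rightarrow> nat \<Rightarrow> real \<Rightarrow> real" where
  "kernel k i \<equiv> step_kernel \<alpha> (tstar t \<alpha> k - t (i - 1)) (tau t i)"

context
  fixes k i :: nat
  assumes i: "1 \<le> i" "i < k"
begin

lemma kernel_params: "0 < tau t i" "0 < tau t (i + 1)" "tau t i < tstar t \<alpha> k - t (i - 1)"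
  using tau_pos[of i] tau_pos[of "i + 1"] tau_less_tstar_minus[OF i] i by auto

lemma tstar_minus_step: "tstar t \<alpha> k - t (i - 1) - tau t i = tstar t \<alpha> k - t i"
  by (simp add: tau_def)

lemma coef_a_eq_moments:
  "coef_a t \<alpha> k i = 2 * tau t i / (tau t i + tau t (i + 1)) * centered_moment (kernel k i)
     - integral {0..1} (kernel k i)"
  unfolding coef_a_def by (rule integral_a_weight_eq_moments[OF kernel_params])

lemma coef_c_eq_moment:
  "coef_c t \<alpha> k i = 2 * tau t i ^ 2 / (tau t (i + 1) * (tau t i + tau t (i + 1))) * centered_moment (kernel k i)"
  unfolding coef_c_def by (rule integral_c_weight_eq_moment[OF kernel_params])

lemma neg_coef_a_by_parts:
  "- coef_a t \<alpha> k i = (tstar t \<alpha> k - t (i - 1)) powr (- \<alpha>) +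
     \<alpha> * tau t i / (tau t i + tau t (i + 1)) *
       integral {0..1} (\<lambda>s. (tau t i + tau t (i + 1) - s * tau t i) * (1 - s) *
         (tstar t \<alpha> k - t (i - 1) - s * tau t i) powr (- \<alpha> - 1))"
  unfolding coef_a_def integral_a_weight_by_parts[OF kernel_params] by simp

lemma kernel_moment_bounds:
  "\<alpha> * tau t i * (tstar t \<alpha> k - t (i - 1)) powr (- \<alpha> - 1) / 12 \<le> centered_moment (kernel k i)"
  "centered_moment (kernel k i) \<le> \<alpha> * tau t i * (tstar t \<alpha> k - t i) powr (- \<alpha> - 1) / 12"
  using step_kernel_centered_moment_bounds[of \<alpha>, OF _ kernel_params(1,3)] alpha
  unfolding tstar_minus_step by simp_all

lemma kernel_integral_le_endpoint:
  "\<alpha> * tau t i * (tstar t \<alpha> k - t (i - 1)) powr (- \<alpha> - 1) / 2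
     \<le> (tstar t \<alpha> k - t i) powr (- \<alpha>) - integral {0..1} (kernel k i)"
  using step_kernel_integral_le_endpoint[of \<alpha>, OF _ kernel_params(1,3)] alpha
  unfolding tstar_minus_step by simp

lemma kernel_moment_nonneg: "0 \<le> centered_moment (kernel k i)"
proof -
  have "0 \<le> \<alpha> * tau t i * (tstar t \<alpha> k - t (i - 1)) powr (- \<alpha> - 1) / 12"
    using alpha kernel_params by simp
  then show ?thesis
    using kernel_moment_bounds(1) by linarith
qed

lemma coef_c_nonneg: "0 \<le> coef_c t \<alpha> k i"
  unfolding coef_c_eq_moment using kernel_moment_nonneg kernel_params by simp

lemma coef_c_le:
  "coef_c t \<alpha> k i \<le> \<alpha> * tau t (i + 1) * (tstar t \<alpha> k - t i) powr (- \<alpha> - 1)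
     * (1 / (6 * (rho t (i + 1) ^ 2 * (1 + rho t (i + 1)))))"
proof -
  define \<tau> \<tau>' Q where "\<tau> = tau t i" "\<tau>' = tau t (i + 1)" "Q = (tstar t \<alpha> k - t i) powr (- \<alpha> - 1)"
  have pos: "0 < \<tau>" "0 < \<tau>'" using kernel_params by (simp_all add: \<tau>_\<tau>'_Q_def)
  have "coef_c t \<alpha> k i \<le> 2 * \<tau>^2 / (\<tau>' * (\<tau> + \<tau>')) * (\<alpha> * \<tau> * Q / 12)"
    unfolding coef_c_eq_moment \<tau>_\<tau>'_Q_def using kernel_moment_bounds(2) kernel_params
    by (intro mult_left_mono) auto
  also have "\<dots> = \<alpha> * \<tau>' * Q * (1 / (6 * ((\<tau>' / \<tau>) ^ 2 * (1 + \<tau>' / \<tau>))))"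
    using pos by (simp add: field_simps power2_eq_square add_pos_pos[THEN less_imp_neq, symmetric])
  finally show ?thesis by (simp add: \<tau>_\<tau>'_Q_def rho_def)
qed

lemma coef_c_a_endpoint_ge:
  "\<alpha> * tau t i * (tstar t \<alpha> k - t (i - 1)) powr (- \<alpha> - 1) * (1/2 + 1 / (6 * rho t (i + 1)))
     \<le> coef_c t \<alpha> k i + coef_a t \<alpha> k i + (tstar t \<alpha> k - t i) powr (- \<alpha>)"
proof -
  define \<tau> \<tau>' L where "\<tau> = tau t i" "\<tau>' = tau t (i + 1)"
    "L = \<alpha> * tau t i * (tstar t \<alpha> k - t (i - 1)) powr (- \<alpha> - 1)"
  have pos: "0 < \<tau>" "0 < \<tau>'" using kernel_params by (simp_all add: \<tau>_\<tau>'_L_def)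
  have "2 * \<tau>^2 / (\<tau>' * (\<tau> + \<tau>')) + 2 * \<tau> / (\<tau> + \<tau>') = 2 * \<tau> / \<tau>'"
    using pos by (simp add: divide_simps power2_eq_square) (simp add: algebra_simps)
  then have "coef_c t \<alpha> k i + coef_a t \<alpha> k i + (tstar t \<alpha> k - t i) powr (- \<alpha>)
      = ((tstar t \<alpha> k - t i) powr (- \<alpha>) - integral {0..1} (kernel k i))
        + 2 * \<tau> / \<tau>' * centered_moment (kernel k i)"
    unfolding coef_c_eq_moment coef_a_eq_moments \<tau>_\<tau>'_L_def[symmetric]
    by (metis (no_types, lifting) add_diff_eq diff_add_eq distrib_right add.commute)
  moreover have "L / 2 \<le> (tstar t \<alpha> k - t i) powr (- \<alpha>) - integral {0..1} (kernel k i)"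
    using kernel_integral_le_endpoint by (simp add: \<tau>_\<tau>'_L_def)
  moreover have "2 * \<tau> / \<tau>' * (L / 12) \<le> 2 * \<tau> / \<tau>' * centered_moment (kernel k i)"
    using kernel_moment_bounds(1) pos by (intro mult_left_mono) (auto simp: \<tau>_\<tau>'_L_def)
  moreover have "L * (1/2 + 1 / (6 * rho t (i + 1))) = L / 2 + 2 * \<tau> / \<tau>' * (L / 12)"
    using pos by (simp add: \<tau>_\<tau>'_L_def rho_def field_simps)
  ultimately show ?thesis by (simp add: \<tau>_\<tau>'_L_def)
qed

lemma coef_a_endpoint_ge:
  "\<alpha> * tau t i * (tstar t \<alpha> k - t (i - 1)) powr (- \<alpha> - 1) / 2
     \<le> coef_a t \<alpha> k i + (tstar t \<alpha> k - t i) powr (- \<alpha>)"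
proof -
  have "0 \<le> 2 * tau t i / (tau t i + tau t (i + 1)) * centered_moment (kernel k i)"
    using kernel_moment_nonneg kernel_params by simp
  then show ?thesis
    using kernel_integral_le_endpoint unfolding coef_a_eq_moments by linarith
qed

lemma neg_coef_a_ge:
  "tau t (i + 1) / (tau t i + tau t (i + 1)) * integral {0..1} (kernel k i) \<le> - coef_a t \<alpha> k i"
proof -
  define \<tau> \<tau>' where "\<tau> = tau t i" "\<tau>' = tau t (i + 1)"
  have pos: "0 < \<tau>" "0 < \<tau>'" using kernel_params by (simp_all add: \<tau>_\<tau>'_def)
  have "centered_moment (kernel k i) \<le> integral {0..1} (kernel k i) / 2"
    using continuous_on_step_kernel[OF kernel_params(1,3)]
    by (rule centered_moment_le_half_integral) (simp add: step_kernel_def)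
  then have "2 * \<tau> / (\<tau> + \<tau>') * centered_moment (kernel k i)
      \<le> 2 * \<tau> / (\<tau> + \<tau>') * (integral {0..1} (kernel k i) / 2)"
    using pos by (intro mult_left_mono) auto
  moreover have "2 * \<tau> / (\<tau> + \<tau>') * (integral {0..1} (kernel k i) / 2)
      = integral {0..1} (kernel k i) - \<tau>' / (\<tau> + \<tau>') * integral {0..1} (kernel k i)"
    using pos by (simp add: field_simps)
  ultimately show ?thesis
    unfolding coef_a_eq_moments \<tau>_\<tau>'_def[symmetric] by linarith
qed

end

lemma integral_step_eq:
  assumes "1 \<le> i" "i < k"
  shows "integral {t (i - 1) .. t i} (\<lambda>s. (tstar t \<alpha> k - s) powr (- \<alpha>))
    = tau t i * integral {0..1} (kernel k i)"
proof -
  have "t (i - 1) \<le> t i" "t i < tstar t \<alpha> k"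
    using tau_pos[of i] less_tstar[OF assms(2)] assms by (auto simp: tau_def)
  then have "integral {t (i - 1) .. t i} (\<lambda>s. (tstar t \<alpha> k - s) powr (- \<alpha>))
      = ((tstar t \<alpha> k - t (i - 1)) powr (1 - \<alpha>) - (tstar t \<alpha> k - t i) powr (1 - \<alpha>)) / (1 - \<alpha>)"
    using has_integral_affine_powr[of \<alpha> 1 "t (i - 1)" "t i" "tstar t \<alpha> k"] alpha
    by (simp add: integral_unique)
  also have "\<dots> = tau t i * integral {0..1} (kernel k i)"
    using integral_step_kernel[OF alpha(2) kernel_params(1,3)[OF assms]] kernel_params[OF assms]
    unfolding tstar_minus_step[OF assms] by simp
  finally show ?thesis .
qed

lemma integral_last_step:
  assumes "1 \<le> k"
  shows "integral {t (k - 1) .. tstar t \<alpha> k} (\<lambda>s. (tstar t \<alpha> k - s) powr (- \<alpha>))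
    = tau t k * (sigma \<alpha> powr (1 - \<alpha>) / ((1 - \<alpha>) * tau t k powr \<alpha>))"
proof -
  have "integral {t (k - 1) .. tstar t \<alpha> k} (\<lambda>s. (tstar t \<alpha> k - s) powr (- \<alpha>))
      = (sigma \<alpha> * tau t k) powr (1 - \<alpha>) / (1 - \<alpha>)"
    using has_integral_affine_powr[of \<alpha> 1 "t (k - 1)" "tstar t \<alpha> k" "tstar t \<alpha> k"]
      alpha tstar_bounds(1)[OF assms] tstar_minus_pred[of k]
    by (simp add: integral_unique)
  also have "\<dots> = tau t k * (sigma \<alpha> powr (1 - \<alpha>) / ((1 - \<alpha>) * tau t k powr \<alpha>))"
    using tau_pos[OF assms] sigma_bounds(1) by (simp add: powr_mult powr_diff ac_simps)
  finally show ?thesis .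
qed

lemma coef_c_pred_le:
  assumes mesh: "\<And>j. 2 \<le> j \<Longrightarrow> rho t j < eta \<Longrightarrow>
      rho t (j + 1) \<le> (rho t j)^2 * (1 + rho t j) / (1 - 3 * (rho t j)^2 * (1 + rho t j))"
    and i: "1 \<le> i" "i < k"
  shows "(if 2 \<le> i then coef_c t \<alpha> k (i - 1) else 0)
    \<le> coef_c t \<alpha> k i + coef_a t \<alpha> k i + (tstar t \<alpha> k - t i) powr (- \<alpha>)"
proof -
  define L where "L = \<alpha> * tau t i * (tstar t \<alpha> k - t (i - 1)) powr (- \<alpha> - 1)"
  have "0 \<le> L" using alpha tau_pos[OF i(1)] by (simp add: L_def)
  have "(if 2 \<le> i then coef_c t \<alpha> k (i - 1) else 0) \<le> L * (1/2 + 1 / (6 * rho t (i + 1)))"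
  proof (cases "2 \<le> i")
    case True
    have "coef_c t \<alpha> k (i - 1) \<le> L * (1 / (6 * (rho t i ^ 2 * (1 + rho t i))))"
      using coef_c_le[of "i - 1" k] True i by (simp add: L_def)
    also have "\<dots> \<le> L * (1/2 + 1 / (6 * rho t (i + 1)))"
      using mesh_ratio_bound[OF rho_pos rho_pos mesh] True \<open>0 \<le> L\<close> by (intro mult_left_mono) auto
    finally show ?thesis using True by simp
  next
    case False
    then show ?thesis using \<open>0 \<le> L\<close> rho_pos[of "i + 1"] i by simp
  qed
  then show ?thesis
    using coef_c_a_endpoint_ge[OF i] by (simp add: L_def)
qed

lemma coef_c_pred_le_of_eta:
  assumes eta: "\<And>j. 2 \<le> j \<Longrightarrow> eta \<le> rho t j" and i: "1 \<le> i" "i < k"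
  shows "(if 2 \<le> i then coef_c t \<alpha> k (i - 1) else 0) \<le> coef_a t \<alpha> k i + (tstar t \<alpha> k - t i) powr (- \<alpha>)"
proof -
  define L where "L = \<alpha> * tau t i * (tstar t \<alpha> k - t (i - 1)) powr (- \<alpha> - 1)"
  have "0 \<le> L" using alpha tau_pos[OF i(1)] by (simp add: L_def)
  have "(if 2 \<le> i then coef_c t \<alpha> k (i - 1) else 0) \<le> L / 2"
  proof (cases "2 \<le> i")
    case True
    have "coef_c t \<alpha> k (i - 1) \<le> L * (1 / (6 * (rho t i ^ 2 * (1 + rho t i))))"
      using coef_c_le[of "i - 1" k] True i by (simp add: L_def)
    also have "\<dots> \<le> L * (1/2)"
      using eta_ratio_bound[OF rho_pos eta] True \<open>0 \<le> L\<close> by (intro mult_left_mono) auto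
    finally show ?thesis using True by simp
  qed (use \<open>0 \<le> L\<close> in simp)
  then show ?thesis
    using coef_a_endpoint_ge[OF i] by (simp add: L_def)
qed


lemma Mmat_diag_ge_integral:
  assumes "1 \<le> k"
  shows "rho_star / ((1 + rho_star) * tau t k) *
      integral {t (k - 1) .. min (t k) (tstar t \<alpha> k)} (\<lambda>s. (tstar t \<alpha> k - s) powr (- \<alpha>))
    \<le> Mmat t \<alpha> k k"
proof -
  define S where "S = sigma \<alpha> powr (1 - \<alpha>) / ((1 - \<alpha>) * tau t k powr \<alpha>)"
  have "0 \<le> S" using alpha by (simp add: S_def)
  have "rho_star / (1 + rho_star) \<le> 1" using rho_star_pos by simp
  have "min (t k) (tstar t \<alpha> k) = tstar t \<alpha> k"
    using tstar_bounds(2)[OF assms] by simp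
  then have "rho_star / ((1 + rho_star) * tau t k) *
      integral {t (k - 1) .. min (t k) (tstar t \<alpha> k)} (\<lambda>s. (tstar t \<alpha> k - s) powr (- \<alpha>))
      = rho_star / (1 + rho_star) * S"
    using integral_last_step[OF assms] tau_pos[OF assms] by (simp add: S_def)
  also have "\<dots> \<le> S"
    using mult_right_mono[OF \<open>rho_star / (1 + rho_star) \<le> 1\<close> \<open>0 \<le> S\<close>] by simp
  also have "\<dots> \<le> Mmat t \<alpha> k k"
    using Mmat_diag[OF assms] coef_c_nonneg[of "k - 1" k] assms by (simp add: S_def)
  finally show ?thesis .
qed

lemma Mmat_below_diag_ge_integral:
  assumes rho_star: "\<And>j. 2 \<le> j \<Longrightarrow> rho_star \<le> rho t j" and j: "1 \<le> j" "j < k"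
  shows "rho_star / ((1 + rho_star) * tau t j) *
      integral {t (j - 1) .. min (t j) (tstar t \<alpha> k)} (\<lambda>s. (tstar t \<alpha> k - s) powr (- \<alpha>))
    \<le> Mmat t \<alpha> k j"
proof -
  define I where "I = integral {0..1} (kernel k j)"
  have "0 \<le> I"
    unfolding I_def using continuous_on_step_kernel[OF kernel_params(1,3)[OF j]]
    by (intro integral_nonneg integrable_continuous_interval) (auto simp: step_kernel_def)
  have "rho_star * tau t j \<le> tau t (j + 1)"
    using rho_star[of "j + 1"] tau_pos[of j] j by (simp add: rho_def pos_le_divide_eq)
  then have weight: "rho_star / (1 + rho_star) \<le> tau t (j + 1) / (tau t j + tau t (j + 1))"
    using rho_star_pos tau_pos[of j] tau_pos[of "j + 1"] j
    by (simp add: divide_simps) (simp add: algebra_simps)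
  have "min (t j) (tstar t \<alpha> k) = t j"
    using less_tstar[OF j(2)] by simp
  then have "rho_star / ((1 + rho_star) * tau t j) *
      integral {t (j - 1) .. min (t j) (tstar t \<alpha> k)} (\<lambda>s. (tstar t \<alpha> k - s) powr (- \<alpha>))
      = rho_star / (1 + rho_star) * I"
    using integral_step_eq[OF j] tau_pos[of j] j by (simp add: I_def)
  also have "\<dots> \<le> tau t (j + 1) / (tau t j + tau t (j + 1)) * I"
    using weight \<open>0 \<le> I\<close> by (rule mult_right_mono)
  also have "\<dots> \<le> - coef_a t \<alpha> k j"
    using neg_coef_a_ge[OF j] by (simp add: I_def)
  also have "\<dots> \<le> Mmat t \<alpha> k j"
    using Mmat_below_diag[OF j] coef_c_nonneg[of "j - 1" k] j by simp
  finally show ?thesis .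
qed

lemma Mmat_ge_integral:
  assumes "\<And>j. 2 \<le> j \<Longrightarrow> rho_star \<le> rho t j" "1 \<le> j" "j \<le> k"
  shows "rho_star / ((1 + rho_star) * tau t j) *
      integral {t (j - 1) .. min (t j) (tstar t \<alpha> k)} (\<lambda>s. (tstar t \<alpha> k - s) powr (- \<alpha>))
    \<le> Mmat t \<alpha> k j"
  using Mmat_diag_ge_integral Mmat_below_diag_ge_integral assms by (cases "j = k") auto

lemma Mmat_sub_pred_ge:
  assumes mesh: "\<And>j. 2 \<le> j \<Longrightarrow> rho t j < eta \<Longrightarrow>
      rho t (j + 1) \<le> (rho t j)^2 * (1 + rho t j) / (1 - 3 * (rho t j)^2 * (1 + rho t j))"
    and j: "2 \<le> j" "j < k"
  shows "\<alpha> * tau t j / (tau t j + tau t (j + 1)) *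
      integral {0..1} (\<lambda>s. (tau t j + tau t (j + 1) - s * tau t j) * (1 - s) *
        (tstar t \<alpha> k - t (j - 1) - s * tau t j) powr (- \<alpha> - 1))
    \<le> Mmat t \<alpha> k j - Mmat t \<alpha> k (j - 1)"
proof -
  have pred: "1 \<le> j - 1" "j - 1 < k" using j by auto
  have "Mmat t \<alpha> k j = coef_c t \<alpha> k (j - 1) - coef_a t \<alpha> k j"
    using Mmat_below_diag[of j k] j by simp
  moreover from mesh pred have "(if 2 \<le> j - 1 then coef_c t \<alpha> k (j - 1 - 1) else 0)
      \<le> coef_c t \<alpha> k (j - 1) + coef_a t \<alpha> k (j - 1) + (tstar t \<alpha> k - t (j - 1)) powr (- \<alpha>)"
    by (rule coef_c_pred_le)
  ultimately show ?thesis
    using Mmat_below_diag[OF pred, where t = t and \<alpha> = \<alpha>] neg_coef_a_by_parts[OF _ j(2)] j by linarith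
qed

lemma Mmat_diag_sub_pred_ge:
  assumes mesh: "\<And>j. 2 \<le> j \<Longrightarrow> rho t j < eta \<Longrightarrow>
      rho t (j + 1) \<le> (rho t j)^2 * (1 + rho t j) / (1 - 3 * (rho t j)^2 * (1 + rho t j))"
    and k: "2 \<le> k"
  shows "\<alpha> / (2 * (1 - \<alpha>) * (sigma \<alpha> * tau t k) powr \<alpha>) \<le> Mmat t \<alpha> k k - Mmat t \<alpha> k (k - 1)"
proof -
  define D where "D = (sigma \<alpha> * tau t k) powr (- \<alpha>)"
  have pred: "1 \<le> k - 1" "k - 1 < k" using k by auto
  have "sigma \<alpha> / (1 - \<alpha>) = 1 + \<alpha> / (2 * (1 - \<alpha>))"
    using alpha by (simp add: sigma_def field_simps)
  moreover have "sigma \<alpha> powr (1 - \<alpha>) / ((1 - \<alpha>) * tau t k powr \<alpha>) = sigma \<alpha> / (1 - \<alpha>) * D"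
    unfolding D_def using sigma_bounds(1) tau_pos[of k] alpha k by (intro powr_one_minus_divide_eq) auto
  moreover have "\<alpha> / (2 * (1 - \<alpha>) * (sigma \<alpha> * tau t k) powr \<alpha>) = \<alpha> / (2 * (1 - \<alpha>)) * D"
    by (simp add: D_def powr_minus divide_inverse)
  ultimately have "Mmat t \<alpha> k k = coef_c t \<alpha> k (k - 1) + D
      + \<alpha> / (2 * (1 - \<alpha>) * (sigma \<alpha> * tau t k) powr \<alpha>)"
    using Mmat_diag[of k] k by (simp add: distrib_right)
  moreover from mesh pred have "(if 2 \<le> k - 1 then coef_c t \<alpha> k (k - 1 - 1) else 0)
      \<le> coef_c t \<alpha> k (k - 1) + coef_a t \<alpha> k (k - 1) + (tstar t \<alpha> k - t (k - 1)) powr (- \<alpha>)"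
    by (rule coef_c_pred_le)
  then have "(if 2 \<le> k - 1 then coef_c t \<alpha> k (k - 1 - 1) else 0)
      \<le> coef_c t \<alpha> k (k - 1) + coef_a t \<alpha> k (k - 1) + D"
    by (simp only: tstar_minus_pred D_def)
  ultimately show ?thesis
    using Mmat_below_diag[OF pred, where t = t and \<alpha> = \<alpha>] by linarith
qed

lemma Mmat_scaled_diag_sub_pred_nonneg:
  assumes eta: "\<And>j. 2 \<le> j \<Longrightarrow> eta \<le> rho t j" and k: "2 \<le> k"
  shows "0 \<le> (1 - \<alpha>) / sigma \<alpha> * Mmat t \<alpha> k k - Mmat t \<alpha> k (k - 1)"
proof -
  define D where "D = (sigma \<alpha> * tau t k) powr (- \<alpha>)"
  have pred: "1 \<le> k - 1" "k - 1 < k" using k by auto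
  have "sigma \<alpha> powr (1 - \<alpha>) / ((1 - \<alpha>) * tau t k powr \<alpha>) = sigma \<alpha> / (1 - \<alpha>) * D"
    unfolding D_def using sigma_bounds(1) tau_pos[of k] alpha k by (intro powr_one_minus_divide_eq) auto
  then have "(1 - \<alpha>) / sigma \<alpha> * Mmat t \<alpha> k k = (1 - \<alpha>) / sigma \<alpha> * coef_c t \<alpha> k (k - 1) + D"
    using Mmat_diag[of k] k sigma_bounds(1) alpha by (simp add: field_simps)
  moreover have "0 \<le> (1 - \<alpha>) / sigma \<alpha> * coef_c t \<alpha> k (k - 1)"
    using coef_c_nonneg[OF pred] sigma_bounds(1) alpha by simp
  moreover from eta pred have "(if 2 \<le> k - 1 then coef_c t \<alpha> k (k - 1 - 1) else 0)
      \<le> coef_a t \<alpha> k (k - 1) + (tstar t \<alpha> k - t (k - 1)) powr (- \<alpha>)"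
    by (rule coef_c_pred_le_of_eta)
  then have "(if 2 \<le> k - 1 then coef_c t \<alpha> k (k - 1 - 1) else 0) \<le> coef_a t \<alpha> k (k - 1) + D"
    by (simp only: tstar_minus_pred D_def)
  ultimately show ?thesis
    using Mmat_below_diag[OF pred, where t = t and \<alpha> = \<alpha>] by linarith
qed

end

theorem lemma2:
  fixes t :: "nat \<Rightarrow> real" and \<alpha> :: real
  assumes alpha: "0 < \<alpha>" "\<alpha> < 1"
    and t0: "t 0 = 0"
    and mono: "strict_mono t"
    and ratio: "\<And>k. 2 \<le> k \<Longrightarrow> rho t k > rho_star \<and> rho t (k + 1) > rho_star \<and>
        (rho t k < eta \<longrightarrow>
           rho t (k + 1) \<le> (rho t k)^2 * (1 + rho t k) / (1 - 3 * (rho t k)^2 * (1 + rho t k)))"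
  shows
    "(\<forall>k j. 1 \<le> j \<and> j \<le> k \<longrightarrow>
        Mmat t \<alpha> k j \<ge> rho_star / ((1 + rho_star) * tau t j) *
          integral {t (j - 1) .. min (t j) (tstar t \<alpha> k)} (\<lambda>s. (tstar t \<alpha> k - s) powr (- \<alpha>)))
     \<and> (\<forall>k j. 2 \<le> j \<and> j \<le> k - 1 \<longrightarrow>
        Mmat t \<alpha> k j - Mmat t \<alpha> k (j - 1) \<ge>
          \<alpha> * tau t j / (tau t j + tau t (j + 1)) *
          integral {0..1} (\<lambda>s. (tau t j + tau t (j + 1) - s * tau t j) * (1 - s) *
             (tstar t \<alpha> k - t (j - 1) - s * tau t j) powr (- \<alpha> - 1)))
     \<and> (\<forall>k. 2 \<le> k \<longrightarrow>
        Mmat t \<alpha> k k - Mmat t \<alpha> k (k - 1) \<ge> \<alpha> / (2 * (1 - \<alpha>) * (sigma \<alpha> * tau t k) powr \<alpha>))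
     \<and> ((\<forall>k. 2 \<le> k \<longrightarrow> rho t k \<ge> eta) \<longrightarrow>
        (\<forall>k. 2 \<le> k \<longrightarrow> (1 - \<alpha>) / sigma \<alpha> * Mmat t \<alpha> k k - Mmat t \<alpha> k (k - 1) \<ge> 0))"
proof -
  have rho_star_le: "rho_star \<le> rho t j" if "2 \<le> j" for j
    using ratio[OF that] by simp
  have mesh: "rho t (j + 1) \<le> (rho t j)^2 * (1 + rho t j) / (1 - 3 * (rho t j)^2 * (1 + rho t j))"
    if "2 \<le> j" "rho t j < eta" for j
    using ratio[OF that(1)] that(2) by blast
  show ?thesis
    using Mmat_ge_integral[OF alpha mono rho_star_le] Mmat_sub_pred_ge[OF alpha mono mesh]
      Mmat_diag_sub_pred_ge[OF alpha mono mesh] Mmat_scaled_diag_sub_pred_nonneg[OF alpha mono]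
    by auto
qed

end
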